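(* Let $R$ be a domain and $x$ a nonzero nonunit element of $R^+$. (i) If $R$ has characteristic zero, then the ideal $(x^\infty)R^+$ has a free resolution of length (at most) one by countably generated free $R^+$-modules; in particular $\mathrm{pd}_{R^+}((x^\infty)R^+)\le 1$. If moreover $R$ is Noetherian, local and Henselian, then $\mathrm{pd}_{R^+}((x^\infty)R^+)=1$. (ii) If $R$ has prime characteristic $p$, then $(x^\infty)R^+$ has a free resolution of length (at most) one by countably generated free $R^+$-modules; if moreover $R$ is Noetherian, local and Henselian, then $\mathrm{pd}_{R^+}((x^\infty)R^+)=1$.
   Context: $R^+$ denotes the integral closure of the domain $R$ in an algebraic closure of its field of fractions. If $\mathrm{char}\,R=0$, $(x^\infty)R^+$ denotes the ideal $(x^{1/n}: n\in\mathbb{N})R^+$, where $x^{1/n}\in R^+$ is a compatible system of roots (i.e. $(x^{1/nm})^m=x^{1/n}$). If $\mathrm{char}\,R=p>0$, $(x^\infty)R^+$ denotes $(x^{1/p^n}: n\ge 0)R^+$ with $x^{1/p^n}$ the unique $p^n$-th root. *)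

theory Defs
  imports Main "HOL-Computational_Algebra.Polynomial"
begin

text \<open>Setting: everything lives inside an ambient field K (a type 'k).
  K is taken to be an algebraic closure of Frac(R): it is algebraically closed and
  algebraic over the subring R.\<close>

definition subring_of :: "'k::field set \<Rightarrow> bool" where
  "subring_of R \<longleftrightarrow> 0 \<in> R \<and> 1 \<in> R \<and>
     (\<forall>a\<in>R. \<forall>b\<in>R. a + b \<in> R \<and> a - b \<in> R \<and> a * b \<in> R)"

definition alg_closed_field :: "'k::field itself \<Rightarrow> bool" where
  "alg_closed_field _ \<longleftrightarrow> (\<forall>p :: 'k poly. degree p > 0 \<longrightarrow> (\<exists>z. poly p z = 0))"

definition coeffs_in :: "'k::field poly \<Rightarrow> 'k set \<Rightarrow> bool" where
  "coeffs_in p R \<longleftrightarrow> (\<forall>i. coeff p i \<in> R)"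

definition algebraic_over :: "'k::field set \<Rightarrow> 'k \<Rightarrow> bool" where
  "algebraic_over R z \<longleftrightarrow> (\<exists>p. p \<noteq> 0 \<and> coeffs_in p R \<and> poly p z = 0)"

definition integral_over :: "'k::field set \<Rightarrow> 'k \<Rightarrow> bool" where
  "integral_over R z \<longleftrightarrow> (\<exists>p. lead_coeff p = 1 \<and> coeffs_in p R \<and> poly p z = 0)"

definition is_alg_closure_of :: "'k::field set \<Rightarrow> bool" where
  "is_alg_closure_of R \<longleftrightarrow> subring_of R \<and> alg_closed_field TYPE('k) \<and> (\<forall>z. algebraic_over R z)"

definition plus_closure :: "'k::field set \<Rightarrow> 'k set" where
  "plus_closure R = {z. integral_over R z}"

definition unit_in :: "'k::field set \<Rightarrow> 'k \<Rightarrow> bool" where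
  "unit_in S a \<longleftrightarrow> (\<exists>b\<in>S. a * b = 1)"

definition ideal_gen :: "'k::field set \<Rightarrow> 'k set \<Rightarrow> 'k set" where
  "ideal_gen S G = {y. \<exists>F a. finite F \<and> F \<subseteq> G \<and> (\<forall>g\<in>F. a g \<in> S) \<and> y = (\<Sum>g\<in>F. a g * g)}"

definition ideal_in :: "'k::field set \<Rightarrow> 'k set \<Rightarrow> bool" where
  "ideal_in S I \<longleftrightarrow> I \<subseteq> S \<and> 0 \<in> I \<and> (\<forall>a\<in>I. \<forall>b\<in>I. a + b \<in> I) \<and>
     (\<forall>s\<in>S. \<forall>a\<in>I. s * a \<in> I)"

definition noetherian_ring :: "'k::field set \<Rightarrow> bool" where
  "noetherian_ring R \<longleftrightarrow> (\<forall>I. ideal_in R I \<longrightarrow> (\<exists>F. finite F \<and> F \<subseteq> I \<and> I = ideal_gen R F))"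

definition nonunits :: "'k::field set \<Rightarrow> 'k set" where
  "nonunits R = {a \<in> R. \<not> unit_in R a}"

definition local_ring :: "'k::field set \<Rightarrow> bool" where
  "local_ring R \<longleftrightarrow> ideal_in R (nonunits R)"

text \<open>Henselian (Stacks 10.153.1): R local, and for every monic f in R[T] and every
  residue a0 with f(a0) = 0 and f'(a0) \<noteq> 0 in the residue field, there is a root
  a in R of f lifting a0.\<close>
definition henselian :: "'k::field set \<Rightarrow> bool" where
  "henselian R \<longleftrightarrow> local_ring R \<and>
     (\<forall>f a0. lead_coeff f = 1 \<and> coeffs_in f R \<and> a0 \<in> R \<and>
        poly f a0 \<in> nonunits R \<and> poly (pderiv f) a0 \<notin> nonunits R \<longrightarrow>
        (\<exists>a\<in>R. poly f a = 0 \<and> a - a0 \<in> nonunits R))"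

text \<open>Free S-module on a basis indexed by A: finitely supported functions A \<rightarrow> S.\<close>
definition free_mod :: "'k::field set \<Rightarrow> 'i set \<Rightarrow> ('i \<Rightarrow> 'k) set" where
  "free_mod S A = {u. (\<forall>i. u i \<in> S) \<and> finite {i. u i \<noteq> 0} \<and> (\<forall>i. i \<notin> A \<longrightarrow> u i = 0)}"

definition hom_FF :: "'k::field set \<Rightarrow> ('i \<Rightarrow> 'k) set \<Rightarrow> (('i \<Rightarrow> 'k) \<Rightarrow> ('j \<Rightarrow> 'k)) \<Rightarrow> bool" where
  "hom_FF S U f \<longleftrightarrow> (\<forall>u\<in>U. \<forall>v\<in>U. \<forall>a\<in>S.
      f (\<lambda>i. a * u i + v i) = (\<lambda>j. a * f u j + f v j))"

definition hom_FK :: "'k::field set \<Rightarrow> ('i \<Rightarrow> 'k) set \<Rightarrow> (('i \<Rightarrow> 'k) \<Rightarrow> 'k) \<Rightarrow> bool" where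
  "hom_FK S U f \<longleftrightarrow> (\<forall>u\<in>U. \<forall>v\<in>U. \<forall>a\<in>S. f (\<lambda>i. a * u i + v i) = a * f u + f v)"

definition hom_KF :: "'k::field set \<Rightarrow> 'k set \<Rightarrow> ('k \<Rightarrow> ('j \<Rightarrow> 'k)) \<Rightarrow> bool" where
  "hom_KF S M f \<longleftrightarrow> (\<forall>x\<in>M. \<forall>y\<in>M. \<forall>a\<in>S. f (a * x + y) = (\<lambda>j. a * f x j + f y j))"

text \<open>M (an S-submodule of K) has a free resolution 0 \<rightarrow> F1 \<rightarrow> F0 \<rightarrow> M \<rightarrow> 0 of length
  at most one by countably generated free S-modules (bases indexed by subsets of nat).\<close>
definition countable_free_res_le1 :: "'k::field set \<Rightarrow> 'k set \<Rightarrow> bool" where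
  "countable_free_res_le1 S M \<longleftrightarrow> (\<exists>(A::nat set) (B::nat set) \<phi> \<psi>.
      \<phi> ` free_mod S B \<subseteq> free_mod S A \<and> inj_on \<phi> (free_mod S B) \<and> hom_FF S (free_mod S B) \<phi> \<and>
      hom_FK S (free_mod S A) \<psi> \<and> \<psi> ` free_mod S A = M \<and>
      {u \<in> free_mod S A. \<psi> u = 0} = \<phi> ` free_mod S B)"

text \<open>Projective: M is a direct summand of a free S-module (on an index set of type 'k,
  which suffices since M \<subseteq> K is generated by a subset of K).\<close>
definition projective_mod :: "'k::field set \<Rightarrow> 'k set \<Rightarrow> bool" where
  "projective_mod S M \<longleftrightarrow> (\<exists>(J::'k set) \<sigma> \<pi>.
      hom_KF S M \<sigma> \<and> \<sigma> ` M \<subseteq> free_mod S J \<and>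
      hom_FK S (free_mod S J) \<pi> \<and> \<pi> ` free_mod S J \<subseteq> M \<and> (\<forall>y\<in>M. \<pi> (\<sigma> y) = y))"

text \<open>pd_S(M) \<le> 1 / = 1, for M \<subseteq> K.  pd \<le> 1 is witnessed by a free resolution of
  length \<le> 1 (free modules are projective); pd = 1 means pd \<le> 1 and M not projective.\<close>
definition pd_eq_1 :: "'k::field set \<Rightarrow> 'k set \<Rightarrow> bool" where
  "pd_eq_1 S M \<longleftrightarrow> countable_free_res_le1 S M \<and> \<not> projective_mod S M"

definition compatible_roots :: "'k::field \<Rightarrow> (nat \<Rightarrow> 'k) \<Rightarrow> bool" where
  "compatible_roots x r \<longleftrightarrow> r 1 = x \<and> (\<forall>n m. n \<ge> 1 \<longrightarrow> m \<ge> 1 \<longrightarrow> r (n * m) ^ m = r n)"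

end

theory Submission
  imports Defs "Jordan_Normal_Form.Char_Poly"
begin

text \<open>
  Write S = R+.  In both characteristics the ideal (x^oo)S is generated by a
  sequence a_0, a_1, ... of nonzero nonunits of S with a_n = a_(n+1)^2 * e_n for some
  e_n in S: in characteristic 0 take a_n = x^(1/(n+1)!), in characteristic p take
  a_n = x^(1/p^n).  For any such "square chain" in a subring S of a field:
  \<^item> the ideal M = (a_n : n) has the free resolution 0 -> S^(N) -> S^(N) -> M -> 0, where
    the second map sends the n-th basis vector to a_n and the first one sends it to
    b_n - d_n b_(n+1) (b the standard basis, a_n = d_n a_(n+1));
  \<^item> M is not projective: a splitting of a free module onto M expresses a_0 through
    finitely many elements of M, all divisible by a single a_N, and the relation
    a_N = a_(N+1)^2 e_N then forces a_(N+1) to be a unit.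
  Non-projectivity holds without the Noetherian/local/Henselian hypotheses.
\<close>

text \<open>Subrings of an arbitrary commutative ring; needed also for polynomial rings R[T].\<close>
definition is_subring :: "'a::comm_ring_1 set \<Rightarrow> bool" where
  "is_subring R \<longleftrightarrow> 0 \<in> R \<and> 1 \<in> R \<and>
     (\<forall>a\<in>R. \<forall>b\<in>R. a + b \<in> R \<and> a - b \<in> R \<and> a * b \<in> R)"

lemma subring_of_iff_is_subring: "subring_of R \<longleftrightarrow> is_subring R"
  unfolding subring_of_def is_subring_def ..

lemma subringD:
  assumes "is_subring R"
  shows "0 \<in> R" "1 \<in> R" "a \<in> R \<Longrightarrow> b \<in> R \<Longrightarrow> a + b \<in> R"
    "a \<in> R \<Longrightarrow> b \<in> R \<Longrightarrow> a - b \<in> R" "a \<in> R \<Longrightarrow> b \<in> R \<Longrightarrow> a * b \<in> R"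
  using assms unfolding is_subring_def by auto

lemma subring_uminus: "is_subring R \<Longrightarrow> a \<in> R \<Longrightarrow> - a \<in> R"
  by (metis diff_0 subringD(1,4))

lemma subring_sum: "is_subring R \<Longrightarrow> (\<And>i. i \<in> A \<Longrightarrow> f i \<in> R) \<Longrightarrow> sum f A \<in> R"
  by (induction A rule: infinite_finite_induct) (auto intro: subringD)

lemma subring_prod: "is_subring R \<Longrightarrow> (\<And>i. i \<in> A \<Longrightarrow> f i \<in> R) \<Longrightarrow> prod f A \<in> R"
  by (induction A rule: infinite_finite_induct) (auto intro: subringD)

lemma subring_power: "is_subring R \<Longrightarrow> a \<in> R \<Longrightarrow> a ^ n \<in> R"
  by (induction n) (auto intro: subringD)

definition polys_in :: "'k::field set \<Rightarrow> 'k poly set" where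
  "polys_in R = {p. coeffs_in p R}"

lemma polys_in_subring:
  assumes R: "is_subring R" shows "is_subring (polys_in R)"
proof -
  have "coeff (a * b) i \<in> R" if "\<forall>i. coeff a i \<in> R" "\<forall>i. coeff b i \<in> R" for a b :: "'a poly" and i
    unfolding coeff_mult using that by (auto intro!: subring_sum[OF R] subringD(5)[OF R])
  moreover have "coeff (1::'a poly) i \<in> R" for i
    using subringD[OF R] by (simp add: coeff_1 del: One_nat_def)
  ultimately show ?thesis
    unfolding is_subring_def polys_in_def coeffs_in_def using subringD[OF R] by auto
qed

lemma pCons_polys_in: "c \<in> R \<Longrightarrow> p \<in> polys_in R \<Longrightarrow> pCons c p \<in> polys_in R"
  unfolding polys_in_def coeffs_in_def by (auto simp: coeff_pCons split: nat.splits)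

lemma const_polys_in: "is_subring R \<Longrightarrow> c \<in> R \<Longrightarrow> [:c:] \<in> polys_in R"
  using pCons_polys_in[of c R 0] polys_in_subring[of R] subringD(1) by blast

lemma ideal_gen_least:
  assumes "0 \<in> T" "\<And>a b. a \<in> T \<Longrightarrow> b \<in> T \<Longrightarrow> a + b \<in> T"
    and "\<And>s g. s \<in> S \<Longrightarrow> g \<in> G \<Longrightarrow> s * g \<in> T"
  shows "ideal_gen S G \<subseteq> T"
proof
  fix y assume "y \<in> ideal_gen S G"
  then obtain F c where F: "finite F" "F \<subseteq> G" "\<forall>g\<in>F. c g \<in> S" "y = (\<Sum>g\<in>F. c g * g)"
    unfolding ideal_gen_def by blast
  have "(\<Sum>g\<in>F. c g * g) \<in> T" using F(1-3)
  proof (induction F rule: finite_induct)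
    case (insert x F)
    have "c x * x \<in> T" using insert.prems by (intro assms(3)) auto
    moreover have "(\<Sum>g\<in>F. c g * g) \<in> T" using insert by auto
    ultimately show ?case using assms(2) insert.hyps by simp
  qed (simp add: assms(1))
  thus "y \<in> T" using F(4) by simp
qed

lemma ideal_gen_0: "0 \<in> ideal_gen S G"
  unfolding ideal_gen_def by (rule CollectI, rule exI[of _ "{}"]) auto

lemma ideal_gen_finite_coeffs:
  assumes S: "is_subring S" and G: "finite G" and y: "y \<in> ideal_gen S G"
  shows "\<exists>c. (\<forall>g. c g \<in> S) \<and> y = (\<Sum>g\<in>G. c g * g)"
proof -
  obtain F c where F: "finite F" "F \<subseteq> G" "\<forall>g\<in>F. c g \<in> S" "y = (\<Sum>g\<in>F. c g * g)"
    using y unfolding ideal_gen_def by blast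
  define c' where "c' g = (if g \<in> F then c g else 0)" for g
  have "(\<Sum>g\<in>G. c' g * g) = (\<Sum>g\<in>F. c g * g)"
    by (rule sum.mono_neutral_cong_right) (use G F(2) in \<open>auto simp: c'_def\<close>)
  moreover have "\<forall>g. c' g \<in> S" using F(3) subringD(1)[OF S] by (auto simp: c'_def)
  ultimately show ?thesis using F(4) by (intro exI[of _ c']) auto
qed

lemma ideal_gen_add:
  assumes S: "is_subring S" and "y1 \<in> ideal_gen S G" "y2 \<in> ideal_gen S G"
  shows "y1 + y2 \<in> ideal_gen S G"
proof -
  obtain F1 c1 where F1: "finite F1" "F1 \<subseteq> G" "\<forall>g\<in>F1. c1 g \<in> S" "y1 = (\<Sum>g\<in>F1. c1 g * g)"
    using assms(2) unfolding ideal_gen_def by blast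
  obtain F2 c2 where F2: "finite F2" "F2 \<subseteq> G" "\<forall>g\<in>F2. c2 g \<in> S" "y2 = (\<Sum>g\<in>F2. c2 g * g)"
    using assms(3) unfolding ideal_gen_def by blast
  define F where "F = F1 \<union> F2"
  define c where "c g = (if g \<in> F1 then c1 g else 0) + (if g \<in> F2 then c2 g else 0)" for g
  have "(\<Sum>g\<in>F. c g * g) = (\<Sum>g\<in>F. if g \<in> F1 then c1 g * g else 0) + (\<Sum>g\<in>F. if g \<in> F2 then c2 g * g else 0)"
    unfolding c_def sum.distrib[symmetric] by (intro sum.cong refl) (auto simp: distrib_right)
  also have "\<dots> = y1 + y2"
    unfolding F1(4) F2(4) F_def using F1(1) F2(1)
    by (simp add: sum.inter_restrict[symmetric] Int_absorb1)
  finally have "y1 + y2 = (\<Sum>g\<in>F. c g * g)" ..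
  moreover have "\<forall>g\<in>F. c g \<in> S" using F1(3) F2(3) subringD[OF S] unfolding c_def by auto
  ultimately show ?thesis unfolding ideal_gen_def using F1(1,2) F2(1,2) unfolding F_def
    by (intro CollectI exI[of _ "F1 \<union> F2"] exI[of _ c]) simp
qed

lemma ideal_gen_smult:
  assumes S: "is_subring S" and "s \<in> S" "y \<in> ideal_gen S G"
  shows "s * y \<in> ideal_gen S G"
proof -
  obtain F c where F: "finite F" "F \<subseteq> G" "\<forall>g\<in>F. c g \<in> S" "y = (\<Sum>g\<in>F. c g * g)"
    using assms(3) unfolding ideal_gen_def by blast
  have "s * y = (\<Sum>g\<in>F. (s * c g) * g)" using F(4) by (simp add: sum_distrib_left mult_ac)
  moreover have "\<forall>g\<in>F. s * c g \<in> S" using F(3) subringD(5)[OF S assms(2)] by auto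
  ultimately show ?thesis unfolding ideal_gen_def using F(1,2)
    by (intro CollectI exI[of _ F] exI[of _ "\<lambda>g. s * c g"]) simp
qed

lemma ideal_gen_gen:
  assumes S: "is_subring S" and "g \<in> G" shows "g \<in> ideal_gen S G"
  unfolding ideal_gen_def using assms(2) subringD(2)[OF S]
  by (intro CollectI exI[of _ "{g}"] exI[of _ "\<lambda>_. 1"]) simp

lemma ideal_gen_sum:
  assumes S: "is_subring S"
  shows "(\<And>i. i \<in> A \<Longrightarrow> f i \<in> ideal_gen S G) \<Longrightarrow> sum f A \<in> ideal_gen S G"
proof (induction A rule: infinite_finite_induct)
  case (insert x F)
  thus ?case using ideal_gen_add[OF S, of "f x" G "sum f F"] by simp
qed (simp_all add: ideal_gen_0)

lemma ideal_gen_mono: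
  assumes S: "is_subring S" and "G \<subseteq> ideal_gen S H"
  shows "ideal_gen S G \<subseteq> ideal_gen S H"
proof (rule ideal_gen_least)
  show "0 \<in> ideal_gen S H" by (rule ideal_gen_0)
  show "a + b \<in> ideal_gen S H" if "a \<in> ideal_gen S H" "b \<in> ideal_gen S H" for a b
    using ideal_gen_add[OF S that] .
  show "s * g \<in> ideal_gen S H" if "s \<in> S" "g \<in> G" for s g
    using ideal_gen_smult[OF S that(1)] assms(2) that(2) by auto
qed

section \<open>The integral closure is a subring closed under roots\<close>

lemma char_poly_polys_in:
  assumes R: "is_subring R" and A: "A \<in> carrier_mat n n"
    and entries: "\<And>i j. i < n \<Longrightarrow> j < n \<Longrightarrow> A $$ (i, j) \<in> R"
  shows "char_poly A \<in> polys_in R"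
proof -
  have PR: "is_subring (polys_in R)" using polys_in_subring[OF R] .
  have entries': "char_poly_matrix A $$ (i,j) \<in> polys_in R" if "i < n" "j < n" for i j
  proof -
    have "char_poly_matrix A $$ (i,j) = (if i = j then [:0,1:] else 0) + [: - A $$ (i,j) :]"
      using that A unfolding char_poly_matrix_def by auto
    moreover have "[:0,1:] \<in> polys_in R"
      by (rule pCons_polys_in[OF subringD(1)[OF R] const_polys_in[OF R subringD(2)[OF R]]])
    ultimately show ?thesis
      using subringD[OF PR] const_polys_in[OF R subring_uminus[OF R entries[OF that]]] by auto
  qed
  have sign: "(signof p :: 'a poly) \<in> polys_in R" for p
    unfolding sign_def using subringD[OF PR] subring_uminus[OF PR] by auto
  have dims: "dim_row (char_poly_matrix A) = n" "dim_col (char_poly_matrix A) = n"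
    using char_poly_matrix_closed[OF A] by auto
  show ?thesis
    unfolding char_poly_def det_def dims
  proof (simp, intro subring_sum[OF PR] subringD(5)[OF PR] sign subring_prod[OF PR])
    fix p i assume p: "p \<in> {p. p permutes {0..<n}}" and i: "i \<in> {0..<n}"
    have "p i \<in> {0..<n}" using permutes_in_image[of p "{0..<n}" i] p i by auto
    thus "char_poly_matrix A $$ (i, p i) \<in> polys_in R" using entries' i by auto
  qed
qed

text \<open>Determinant trick: an eigenvalue of a matrix with entries in R is integral over R,
  being a root of the (monic) characteristic polynomial.\<close>
lemma det_trick_nat:
  fixes n :: nat and g :: "nat \<Rightarrow> 'k::field"
  assumes R: "is_subring R" and g: "i0 < n" "g i0 \<noteq> 0"
    and c: "\<And>i k. c i k \<in> R"
    and eq: "\<And>i. i < n \<Longrightarrow> z * g i = (\<Sum>k<n. c i k * g k)"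
  shows "integral_over R z"
proof -
  define A where "A = mat n n (\<lambda>(i,k). c i k)"
  define v where "v = vec n g"
  have A: "A \<in> carrier_mat n n" unfolding A_def by simp
  have "A *\<^sub>v v = z \<cdot>\<^sub>v v"
  proof (rule eq_vecI)
    fix i assume "i < dim_vec (z \<cdot>\<^sub>v v)"
    hence i: "i < n" unfolding v_def by simp
    have "(A *\<^sub>v v) $ i = (\<Sum>k<n. c i k * g k)"
      using i unfolding A_def v_def by (simp add: scalar_prod_def lessThan_atLeast0 row_def)
    also have "\<dots> = z * g i" using eq[OF i] by simp
    finally show "(A *\<^sub>v v) $ i = (z \<cdot>\<^sub>v v) $ i" using i unfolding v_def by simp
  qed (simp add: A_def v_def)
  moreover have "v \<noteq> 0\<^sub>v n"
  proof
    assume "v = 0\<^sub>v n" hence "v $ i0 = 0" using g by simp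
    thus False using g unfolding v_def by simp
  qed
  ultimately have "eigenvalue A z"
    unfolding eigenvalue_def eigenvector_def using A by (auto simp: v_def intro!: exI[of _ v])
  hence "poly (char_poly A) z = 0" using eigenvalue_root_char_poly[OF A] by simp
  moreover have "lead_coeff (char_poly A) = 1" using degree_monic_char_poly[OF A] by simp
  moreover have "char_poly A \<in> polys_in R"
    by (rule char_poly_polys_in[OF R A]) (simp add: A_def c)
  ultimately show ?thesis unfolding integral_over_def polys_in_def by auto
qed

lemma det_trick:
  fixes g :: "'a \<Rightarrow> 'k::field"
  assumes R: "is_subring R" and I: "finite I" "i0 \<in> I" "g i0 \<noteq> 0"
    and c: "\<And>i k. c i k \<in> R"
    and eq: "\<And>i. i \<in> I \<Longrightarrow> z * g i = (\<Sum>k\<in>I. c i k * g k)"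
  shows "integral_over R z"
proof -
  define n where "n = card I"
  obtain h where h: "bij_betw h {..<n} I"
    using ex_bij_betw_nat_finite[OF I(1)] unfolding n_def by (auto simp: atLeast0LessThan)
  obtain j0 where j0: "j0 < n" "h j0 = i0" using h I(2) unfolding bij_betw_def by auto
  have hI: "j < n \<Longrightarrow> h j \<in> I" for j using h unfolding bij_betw_def by auto
  show ?thesis
  proof (rule det_trick_nat[OF R j0(1), of "g \<circ> h" "\<lambda>i k. c (h i) (h k)"])
    show "(g \<circ> h) j0 \<noteq> 0" using j0 I by simp
    show "c (h i) (h k) \<in> R" for i k by (rule c)
    fix i assume i: "i < n"
    have "z * (g \<circ> h) i = (\<Sum>k\<in>I. c (h i) k * g k)" using eq hI[OF i] by simp
    also have "\<dots> = (\<Sum>k<n. c (h i) (h k) * (g \<circ> h) k)"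
      using sum.reindex_bij_betw[OF h, of "\<lambda>k. c (h i) k * g k"] by simp
    finally show "z * (g \<circ> h) i = (\<Sum>k<n. c (h i) (h k) * (g \<circ> h) k)" .
  qed
qed

text \<open>By the determinant trick, stabilizing a
  finitely generated nonzero module implies integrality; conversely an integral x
  stabilizes the module generated by its first powers.\<close>
definition stabilizes :: "'k::field set \<Rightarrow> 'k set \<Rightarrow> 'k \<Rightarrow> bool" where
  "stabilizes R G z \<longleftrightarrow> (\<forall>g\<in>G. z * g \<in> ideal_gen R G)"

lemma integral_if_stabilizes:
  assumes R: "is_subring R" and G: "finite G" "g0 \<in> G" "g0 \<noteq> 0" and z: "stabilizes R G z"
  shows "integral_over R z"
proof -
  have "\<forall>g\<in>G. \<exists>c. (\<forall>f. c f \<in> R) \<and> z * g = (\<Sum>f\<in>G. c f * f)"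
    using z ideal_gen_finite_coeffs[OF R G(1)] unfolding stabilizes_def by blast
  then obtain c where c: "\<forall>g\<in>G. (\<forall>f. c g f \<in> R) \<and> z * g = (\<Sum>f\<in>G. c g f * f)"
    by (rule bchoice[THEN exE]) blast
  define c' where "c' g f = (if g \<in> G then c g f else 0)" for g f
  show ?thesis
  proof (rule det_trick[where g = "\<lambda>f. f" and c = c', OF R G])
    show "c' g f \<in> R" for g f using c subringD(1)[OF R] by (auto simp: c'_def)
    show "z * g = (\<Sum>f\<in>G. c' g f * f)" if "g \<in> G" for g using c that by (simp add: c'_def)
  qed
qed

lemma stabilizes_ideal:
  assumes R: "is_subring R" and z: "stabilizes R G z" and w: "w \<in> ideal_gen R G"
  shows "z * w \<in> ideal_gen R G"
proof -
  have "ideal_gen R G \<subseteq> {w. z * w \<in> ideal_gen R G}"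
  proof (rule ideal_gen_least)
    show "0 \<in> {w. z * w \<in> ideal_gen R G}" by (simp add: ideal_gen_0)
    show "a + b \<in> {w. z * w \<in> ideal_gen R G}"
      if "a \<in> {w. z * w \<in> ideal_gen R G}" "b \<in> {w. z * w \<in> ideal_gen R G}" for a b
      using ideal_gen_add[OF R] that by (simp add: distrib_left)
    show "s * g \<in> {w. z * w \<in> ideal_gen R G}" if "s \<in> R" "g \<in> G" for s g
      using ideal_gen_smult[OF R that(1)] z that(2) unfolding stabilizes_def
      by (simp add: mult.left_commute)
  qed
  thus ?thesis using w by blast
qed

lemma stabilizes_add:
  "is_subring R \<Longrightarrow> stabilizes R G y \<Longrightarrow> stabilizes R G z \<Longrightarrow> stabilizes R G (y + z)"
  unfolding stabilizes_def by (simp add: distrib_right ideal_gen_add)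

lemma stabilizes_mult:
  assumes R: "is_subring R" and "stabilizes R G y" "stabilizes R G z"
  shows "stabilizes R G (y * z)"
  using assms stabilizes_ideal[OF R, of G y] unfolding stabilizes_def by (simp add: mult.assoc)

lemma stabilizes_scalar:
  "is_subring R \<Longrightarrow> r \<in> R \<Longrightarrow> stabilizes R G r"
  unfolding stabilizes_def by (simp add: ideal_gen_smult ideal_gen_gen)

definition set_times :: "'k::field set \<Rightarrow> 'k set \<Rightarrow> 'k set" where
  "set_times G H = {g * h |g h. g \<in> G \<and> h \<in> H}"

lemma set_times_commute: "set_times G H = set_times H G"
  unfolding set_times_def by (auto; metis mult.commute)

lemma finite_set_times: "finite G \<Longrightarrow> finite H \<Longrightarrow> finite (set_times G H)"
proof -
  have "set_times G H = (\<lambda>(g, h). g * h) ` (G \<times> H)" unfolding set_times_def by auto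
  thus "finite G \<Longrightarrow> finite H \<Longrightarrow> finite (set_times G H)" by simp
qed

lemma ideal_gen_times:
  assumes R: "is_subring R" and w: "w \<in> ideal_gen R G" and h: "h \<in> H"
  shows "w * h \<in> ideal_gen R (set_times G H)"
proof -
  have "ideal_gen R G \<subseteq> {w. w * h \<in> ideal_gen R (set_times G H)}"
  proof (rule ideal_gen_least)
    show "0 \<in> {w. w * h \<in> ideal_gen R (set_times G H)}" by (simp add: ideal_gen_0)
    show "a + b \<in> {w. w * h \<in> ideal_gen R (set_times G H)}"
      if "a \<in> {w. w * h \<in> ideal_gen R (set_times G H)}"
        "b \<in> {w. w * h \<in> ideal_gen R (set_times G H)}" for a b
      using ideal_gen_add[OF R] that by (simp add: distrib_right)
    show "s * g \<in> {w. w * h \<in> ideal_gen R (set_times G H)}" if "s \<in> R" "g \<in> G" for s g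
    proof -
      have "g * h \<in> set_times G H" using that(2) h unfolding set_times_def by blast
      thus ?thesis using ideal_gen_smult[OF R that(1) ideal_gen_gen[OF R]] by (simp add: mult.assoc)
    qed
  qed
  thus ?thesis using w by blast
qed

lemma stabilizes_set_times:
  assumes R: "is_subring R" and z: "stabilizes R G z"
  shows "stabilizes R (set_times G H) z"
  unfolding stabilizes_def
proof
  fix f assume "f \<in> set_times G H"
  then obtain g h where f: "f = g * h" "g \<in> G" "h \<in> H" unfolding set_times_def by blast
  have "z * g \<in> ideal_gen R G" using z f(2) unfolding stabilizes_def by blast
  from ideal_gen_times[OF R this f(3)] show "z * f \<in> ideal_gen R (set_times G H)"
    by (simp add: f(1) mult.assoc)
qed

definition powers_below :: "'k::field \<Rightarrow> nat \<Rightarrow> 'k set" where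
  "powers_below x m = (\<lambda>k. x ^ k) ` {..<m}"

lemma one_in_powers_below: "m \<ge> 1 \<Longrightarrow> 1 \<in> powers_below x m"
  unfolding powers_below_def by (rule image_eqI[of _ _ 0]) auto

lemma integral_stabilizes_powers:
  assumes R: "is_subring R" and x: "integral_over R x"
  shows "\<exists>m\<ge>1. stabilizes R (powers_below x m) x"
proof -
  obtain P where P: "lead_coeff P = 1" "coeffs_in P R" "poly P x = 0"
    using x unfolding integral_over_def by auto
  define m where "m = degree P"
  have m1: "m \<ge> 1"
  proof (rule ccontr)
    assume "\<not> m \<ge> 1"
    hence "degree P = 0" unfolding m_def by simp
    hence "poly P x = 1" using P(1) unfolding poly_altdef by simp
    thus False using P(3) by simp
  qed
  have top: "x ^ m = (\<Sum>k<m. (- coeff P k) * x ^ k)"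
  proof -
    have "0 = (\<Sum>k\<le>m. coeff P k * x ^ k)" using P(3) unfolding poly_altdef m_def by simp
    also have "\<dots> = (\<Sum>k<m. coeff P k * x ^ k) + x ^ m"
      using P(1) unfolding m_def by (simp add: lessThan_Suc_atMost[symmetric])
    finally show ?thesis by (simp add: sum_negf eq_neg_iff_add_eq_0 add.commute)
  qed
  have "x * g \<in> ideal_gen R (powers_below x m)" if hg: "g \<in> powers_below x m" for g
  proof -
    obtain i where i: "g = x ^ i" "i < m" using hg unfolding powers_below_def by blast
    show ?thesis
    proof (cases "Suc i < m")
      case True
      hence "x * g \<in> powers_below x m"
        unfolding i(1) powers_below_def by (auto simp flip: power_Suc)
      thus ?thesis by (rule ideal_gen_gen[OF R])
    next
      case False
      hence "m = Suc i" using i(2) by simp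
      hence "x * g = x ^ m" using i(1) by simp
      also have "\<dots> = (\<Sum>k<m. (- coeff P k) * x ^ k)" by (rule top)
      also have "\<dots> \<in> ideal_gen R (powers_below x m)"
        using P(2) unfolding coeffs_in_def powers_below_def
        by (intro ideal_gen_sum[OF R] ideal_gen_smult[OF R] ideal_gen_gen[OF R] subring_uminus[OF R]) auto
      finally show ?thesis .
    qed
  qed
  thus ?thesis unfolding stabilizes_def using m1 by blast
qed

lemma integral_add_mult:
  assumes R: "is_subring R" and x: "integral_over R x" and y: "integral_over R y"
  shows "integral_over R (x + y)" and "integral_over R (x * y)"
proof -
  obtain m where m: "m \<ge> 1" "stabilizes R (powers_below x m) x"
    using integral_stabilizes_powers[OF R x] by blast
  obtain n where n: "n \<ge> 1" "stabilizes R (powers_below y n) y"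
    using integral_stabilizes_powers[OF R y] by blast
  define G where "G = set_times (powers_below x m) (powers_below y n)"
  have G: "finite G" "1 \<in> G"
  proof -
    show "finite G" unfolding G_def by (simp add: finite_set_times powers_below_def)
    show "1 \<in> G" unfolding G_def set_times_def
      using one_in_powers_below[OF m(1), of x] one_in_powers_below[OF n(1), of y] by force
  qed
  have sx: "stabilizes R G x" unfolding G_def by (rule stabilizes_set_times[OF R m(2)])
  have sy: "stabilizes R G y"
    unfolding G_def set_times_commute[of "powers_below x m"] by (rule stabilizes_set_times[OF R n(2)])
  show "integral_over R (x + y)"
    by (rule integral_if_stabilizes[OF R G one_neq_zero stabilizes_add[OF R sx sy]])
  show "integral_over R (x * y)"
    by (rule integral_if_stabilizes[OF R G one_neq_zero stabilizes_mult[OF R sx sy]])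
qed

lemma integral_uminus:
  assumes R: "is_subring R" and x: "integral_over R x"
  shows "integral_over R (- x)"
proof -
  obtain m where m: "m \<ge> 1" "stabilizes R (powers_below x m) x"
    using integral_stabilizes_powers[OF R x] by blast
  have "stabilizes R (powers_below x m) ((- 1) * x)"
    by (rule stabilizes_mult[OF R stabilizes_scalar[OF R] m(2)])
      (rule subring_uminus[OF R subringD(2)[OF R]])
  thus ?thesis
    by (intro integral_if_stabilizes[OF R _ one_in_powers_below[OF m(1)]])
      (simp_all add: powers_below_def)
qed

text \<open>Elements of R are integral over R (root of T - r).\<close>
lemma integral_in_R: "is_subring R \<Longrightarrow> r \<in> R \<Longrightarrow> integral_over R r"
  unfolding integral_over_def coeffs_in_def
  by (rule exI[of _ "[:-r, 1:]"]) (auto simp: coeff_pCons subring_uminus subringD split: nat.splits)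

text \<open>Roots of integral elements are integral: z stabilizes the module generated by the
  products z^a x^b (a < q, b < m), since z^q = x.\<close>
lemma integral_root:
  assumes R: "is_subring R" and x: "integral_over R x" and q: "q \<ge> 1" and z: "z ^ q = x"
  shows "integral_over R z"
proof -
  obtain m where m: "m \<ge> 1" "stabilizes R (powers_below x m) x"
    using integral_stabilizes_powers[OF R x] by blast
  define G where "G = set_times (powers_below z q) (powers_below x m)"
  have G: "finite G" "1 \<in> G"
  proof -
    show "finite G" unfolding G_def by (simp add: finite_set_times powers_below_def)
    show "1 \<in> G" unfolding G_def set_times_def
      using one_in_powers_below[OF q, of z] one_in_powers_below[OF m(1), of x] by force
  qed
  have sx: "stabilizes R G x"
    unfolding G_def set_times_commute[of "powers_below z q"] by (rule stabilizes_set_times[OF R m(2)])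
  have "z * g \<in> ideal_gen R G" if hg: "g \<in> G" for g
  proof -
    obtain a b where g: "g = z ^ a * x ^ b" "a < q" "b < m"
      using hg unfolding G_def set_times_def powers_below_def by blast
    show ?thesis
    proof (cases "Suc a < q")
      case True
      have "z * g = z ^ Suc a * x ^ b" using g(1) by simp
      moreover have "z ^ Suc a \<in> powers_below z q" "x ^ b \<in> powers_below x m"
        using True g(3) unfolding powers_below_def by (auto intro!: image_eqI)
      ultimately have "z * g \<in> G" unfolding G_def set_times_def by blast
      thus ?thesis by (rule ideal_gen_gen[OF R])
    next
      case False
      hence "q = Suc a" using g(2) by simp
      hence "z * g = x * (1 * x ^ b)" using g(1) z by (simp add: mult.assoc)
      moreover have "x ^ b \<in> powers_below x m" using g(3) unfolding powers_below_def by auto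
      hence "1 * x ^ b \<in> G"
        unfolding G_def set_times_def using one_in_powers_below[OF q, of z] by blast
      ultimately show ?thesis using sx unfolding stabilizes_def by simp
    qed
  qed
  thus ?thesis using integral_if_stabilizes[OF R G one_neq_zero] unfolding stabilizes_def by blast
qed

lemma plus_closure_subring:
  assumes R: "is_subring R" shows "is_subring (plus_closure R)"
proof -
  have "integral_over R (a - b)" if "integral_over R a" "integral_over R b" for a b
    using integral_add_mult(1)[OF R that(1) integral_uminus[OF R that(2)]] by simp
  thus ?thesis unfolding is_subring_def plus_closure_def
    using integral_in_R[OF R] subringD[OF R] integral_add_mult[OF R] by auto
qed

section \<open>A free resolution of length one for the ideal of a divisibility chain\<close>

text \<open>Throughout, a : nat \<Rightarrow> S is a chain a_n = d_n a_(n+1) of nonzero elements and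
  M = (a_n : n).  The resolution is 0 \<rightarrow> S^(N) --phi_map d--> S^(N) --psi_map a--> M \<rightarrow> 0.\<close>

lemma free_mod_UNIV: "u \<in> free_mod S UNIV \<longleftrightarrow> (\<forall>i. u i \<in> S) \<and> finite {i. u i \<noteq> 0}"
  unfolding free_mod_def by simp

definition psi_map :: "(nat \<Rightarrow> 'k::field) \<Rightarrow> (nat \<Rightarrow> 'k) \<Rightarrow> 'k" where
  "psi_map a u = (\<Sum>i\<in>{i. u i \<noteq> 0}. u i * a i)"

text \<open>phi_map d sends the basis vector b_n to b_n - d_n b_(n+1).\<close>
definition phi_map :: "(nat \<Rightarrow> 'k::field) \<Rightarrow> (nat \<Rightarrow> 'k) \<Rightarrow> (nat \<Rightarrow> 'k)" where
  "phi_map d v = (\<lambda>j. v j - (case j of 0 \<Rightarrow> 0 | Suc k \<Rightarrow> d k * v k))"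

lemma psi_eq:
  assumes "finite F" "{i. u i \<noteq> 0} \<subseteq> F"
  shows "psi_map a u = (\<Sum>i\<in>F. u i * a i)"
  unfolding psi_map_def by (rule sum.mono_neutral_left) (use assms in auto)

lemma psi_hom:
  fixes a :: "nat \<Rightarrow> 'k::field"
  assumes S: "is_subring S"
  shows "hom_FK S (free_mod S UNIV) (psi_map a)"
  unfolding hom_FK_def
proof (intro ballI)
  fix u v :: "nat \<Rightarrow> 'k" and s assume u: "u \<in> free_mod S UNIV" and v: "v \<in> free_mod S UNIV" and s: "s \<in> S"
  define F where "F = {i. u i \<noteq> 0} \<union> {i. v i \<noteq> 0}"
  have F: "finite F" using u v unfolding F_def free_mod_UNIV by auto
  have "psi_map a (\<lambda>i. s * u i + v i) = (\<Sum>i\<in>F. (s * u i + v i) * a i)"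
    by (rule psi_eq[OF F]) (auto simp: F_def)
  also have "\<dots> = s * (\<Sum>i\<in>F. u i * a i) + (\<Sum>i\<in>F. v i * a i)"
    by (simp add: sum.distrib[symmetric] sum_distrib_left algebra_simps)
  also have "\<dots> = s * psi_map a u + psi_map a v"
    using psi_eq[OF F, of u a] psi_eq[OF F, of v a] by (auto simp: F_def)
  finally show "psi_map a (\<lambda>i. s * u i + v i) = s * psi_map a u + psi_map a v" .
qed

lemma psi_image:
  assumes S: "is_subring S"
  shows "psi_map a ` free_mod S UNIV = ideal_gen S (range a)"
proof
  let ?F = "free_mod S (UNIV :: nat set)"
  show "psi_map a ` ?F \<subseteq> ideal_gen S (range a)"
  proof
    fix y assume "y \<in> psi_map a ` ?F"
    then obtain u where u: "u \<in> ?F" "y = psi_map a u" by blast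
    have "psi_map a u \<in> ideal_gen S (range a)"
      unfolding psi_map_def using u(1) unfolding free_mod_UNIV
      by (intro ideal_gen_sum[OF S] ideal_gen_smult[OF S] ideal_gen_gen[OF S]) auto
    thus "y \<in> ideal_gen S (range a)" using u by simp
  qed
  show "ideal_gen S (range a) \<subseteq> psi_map a ` ?F"
  proof (rule ideal_gen_least)
    have "psi_map a (\<lambda>_. 0) = 0" unfolding psi_map_def by simp
    moreover have "(\<lambda>_. 0) \<in> ?F" using subringD(1)[OF S] unfolding free_mod_UNIV by simp
    ultimately show "0 \<in> psi_map a ` ?F" by (metis image_eqI)
  next
    fix y1 y2 assume "y1 \<in> psi_map a ` ?F" "y2 \<in> psi_map a ` ?F"
    then obtain u v where uv: "u \<in> ?F" "v \<in> ?F" "y1 = psi_map a u" "y2 = psi_map a v" by blast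
    have "(\<lambda>i. 1 * u i + v i) \<in> ?F"
      using uv unfolding free_mod_UNIV
      by (auto intro!: subringD[OF S] intro: finite_subset[of _ "{i. u i \<noteq> 0} \<union> {i. v i \<noteq> 0}"])
    moreover have "psi_map a (\<lambda>i. 1 * u i + v i) = 1 * psi_map a u + psi_map a v"
      using psi_hom[OF S, of a] uv(1,2) subringD(2)[OF S] unfolding hom_FK_def by blast
    hence "psi_map a (\<lambda>i. 1 * u i + v i) = y1 + y2" using uv by simp
    ultimately show "y1 + y2 \<in> psi_map a ` ?F" by (metis image_eqI)
  next
    fix s g assume s: "s \<in> S" and "g \<in> range a"
    then obtain i where gi: "g = a i" by blast
    define e where "e = (\<lambda>j. if j = i then s else 0)"
    have eF: "e \<in> ?F" using s subringD(1)[OF S] unfolding free_mod_UNIV e_def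
      by (auto intro: finite_subset[of _ "{i}"])
    have "psi_map a e = (\<Sum>j\<in>{i}. e j * a j)" by (rule psi_eq) (auto simp: e_def)
    hence "psi_map a e = s * g" by (simp add: e_def gi)
    thus "s * g \<in> psi_map a ` ?F" using eF by (metis image_eqI)
  qed
qed

lemma phi_in_free:
  assumes S: "is_subring S" and d: "\<And>n. d n \<in> S" and v: "v \<in> free_mod S UNIV"
  shows "phi_map d v \<in> free_mod S UNIV"
  unfolding free_mod_UNIV
proof
  show "\<forall>i. phi_map d v i \<in> S"
    using v d unfolding free_mod_UNIV phi_map_def
    by (auto intro!: subringD[OF S] split: nat.splits)
  have "{i. phi_map d v i \<noteq> 0} \<subseteq> {i. v i \<noteq> 0} \<union> Suc ` {i. v i \<noteq> 0}"
  proof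
    fix i assume i: "i \<in> {i. phi_map d v i \<noteq> 0}"
    show "i \<in> {i. v i \<noteq> 0} \<union> Suc ` {i. v i \<noteq> 0}"
    proof (cases i)
      case 0 thus ?thesis using i unfolding phi_map_def by auto
    next
      case (Suc k) thus ?thesis using i unfolding phi_map_def by (cases "v k = 0") auto
    qed
  qed
  thus "finite {i. phi_map d v i \<noteq> 0}"
    using v unfolding free_mod_UNIV by (meson finite_UnI finite_imageI finite_subset)
qed

lemma phi_inj: "inj_on (phi_map d) X"
proof (rule inj_onI)
  fix v w assume eq: "phi_map d v = phi_map d w"
  have "v j = w j" for j
  proof (induction j)
    case 0 thus ?case using fun_cong[OF eq, of 0] unfolding phi_map_def by simp
  next
    case (Suc j) thus ?case using fun_cong[OF eq, of "Suc j"] unfolding phi_map_def by simp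
  qed
  thus "v = w" by auto
qed

lemma phi_hom: "hom_FF S X (phi_map d)"
  unfolding hom_FF_def phi_map_def
  by (auto simp: fun_eq_iff algebra_simps split: nat.splits)

lemma telescope:
  assumes ad: "\<And>n. a n = d n * a (Suc n)"
  shows "(\<Sum>j<Suc K. phi_map d v j * a j) = v K * a K"
proof (induction K)
  case 0 thus ?case unfolding phi_map_def by simp
next
  case (Suc K)
  have "(\<Sum>j<Suc (Suc K). phi_map d v j * a j) = v K * a K + (v (Suc K) - d K * v K) * a (Suc K)"
    using Suc unfolding phi_map_def by simp
  also have "\<dots> = v (Suc K) * a (Suc K)" using ad[of K] by (simp add: algebra_simps)
  finally show ?case .
qed

lemma phi_image_in_kernel:
  assumes ad: "\<And>n. a n = d n * a (Suc n)" and v: "v \<in> free_mod S UNIV"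
  shows "psi_map a (phi_map d v) = 0"
proof -
  obtain N where N: "{i. v i \<noteq> 0} \<subseteq> {..<N}"
    using v unfolding free_mod_UNIV by (meson finite_nat_bounded)
  have "{i. phi_map d v i \<noteq> 0} \<subseteq> {..<Suc N}"
  proof
    fix i assume i: "i \<in> {i. phi_map d v i \<noteq> 0}"
    show "i \<in> {..<Suc N}"
    proof (rule ccontr)
      assume "i \<notin> {..<Suc N}"
      then obtain k where "i = Suc k" "k \<ge> N" by (cases i) auto
      moreover have "v i = 0" "v k = 0" using N \<open>i \<notin> _\<close> calculation by auto
      ultimately show False using i unfolding phi_map_def by simp
    qed
  qed
  hence "psi_map a (phi_map d v) = (\<Sum>j<Suc N. phi_map d v j * a j)" by (intro psi_eq) auto
  also have "\<dots> = v N * a N" by (rule telescope[of a d, OF ad])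
  finally show ?thesis using N by auto
qed

text \<open>Conversely a relation u among the a_n is the image of the vector of partial sums
  v_j = (u_0 a_0 + ... + u_j a_j) / a_j, which lies in S by the chain condition.\<close>
lemma kernel_in_phi_image:
  assumes S: "is_subring S" and a0: "\<And>n. a n \<noteq> 0"
    and dS: "\<And>n. d n \<in> S" and ad: "\<And>n. a n = d n * a (Suc n)"
    and u: "u \<in> free_mod S UNIV" "psi_map a u = 0"
  shows "u \<in> phi_map d ` free_mod S UNIV"
proof -
  obtain N where N: "{i. u i \<noteq> 0} \<subseteq> {..<N}"
    using u(1) unfolding free_mod_UNIV by (meson finite_nat_bounded)
  define v where "v j = (\<Sum>i<Suc j. u i * a i) / a j" for j
  have va: "v j * a j = (\<Sum>i<Suc j. u i * a i)" for j unfolding v_def using a0[of j] by simp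
  have rec: "v (Suc j) = d j * v j + u (Suc j)" for j
  proof -
    have "v (Suc j) * a (Suc j) = v j * a j + u (Suc j) * a (Suc j)" unfolding va by simp
    also have "\<dots> = (d j * v j + u (Suc j)) * a (Suc j)" using ad[of j] by (simp add: algebra_simps)
    finally show ?thesis using a0[of "Suc j"] by simp
  qed
  have vS: "v j \<in> S" for j
  proof (induction j)
    case 0 thus ?case using u(1) va[of 0] a0[of 0] unfolding free_mod_UNIV by simp
  next
    case (Suc j) thus ?case unfolding rec using u(1) dS unfolding free_mod_UNIV
      by (auto intro!: subringD[OF S])
  qed
  have "v j = 0" if "j \<ge> N" for j
  proof -
    have "psi_map a u = (\<Sum>i<Suc j. u i * a i)" using N that by (intro psi_eq) auto
    hence "v j * a j = 0" using va u(2) by simp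
    thus ?thesis using a0[of j] by simp
  qed
  hence "{i. v i \<noteq> 0} \<subseteq> {..<N}" by (auto simp: not_less[symmetric])
  hence vF: "v \<in> free_mod S UNIV" using vS finite_subset unfolding free_mod_UNIV by blast
  have "phi_map d v = u"
  proof
    fix j show "phi_map d v j = u j"
    proof (cases j)
      case 0 thus ?thesis unfolding phi_map_def using va[of 0] a0[of 0] by simp
    next
      case (Suc k) thus ?thesis unfolding phi_map_def using rec[of k] by simp
    qed
  qed
  thus ?thesis using vF by (metis image_eqI)
qed

theorem chain_resolution:
  assumes S: "is_subring S" and a0: "\<And>n. a n \<noteq> 0"
    and dS: "\<And>n. d n \<in> S" and ad: "\<And>n. a n = d n * a (Suc n)"
  shows "countable_free_res_le1 S (ideal_gen S (range a))"
  unfolding countable_free_res_le1_def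
proof (intro exI conjI)
  let ?F = "free_mod S (UNIV :: nat set)"
  show "phi_map d ` ?F \<subseteq> ?F" using phi_in_free[OF S dS] by auto
  show "inj_on (phi_map d) ?F" by (rule phi_inj)
  show "hom_FF S ?F (phi_map d)" by (rule phi_hom)
  show "hom_FK S ?F (psi_map a)" by (rule psi_hom[OF S])
  show "psi_map a ` ?F = ideal_gen S (range a)" by (rule psi_image[OF S])
  show "{u \<in> ?F. psi_map a u = 0} = phi_map d ` ?F"
  proof
    show "{u \<in> ?F. psi_map a u = 0} \<subseteq> phi_map d ` ?F"
    proof
      fix u assume "u \<in> {u \<in> ?F. psi_map a u = 0}"
      thus "u \<in> phi_map d ` ?F"
        using kernel_in_phi_image[where a = a and d = d, OF S a0 dS ad] by simp
    qed
    show "phi_map d ` ?F \<subseteq> {u \<in> ?F. psi_map a u = 0}"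
    proof
      fix w assume "w \<in> phi_map d ` ?F"
      then obtain v where "v \<in> ?F" "w = phi_map d v" by blast
      thus "w \<in> {u \<in> ?F. psi_map a u = 0}"
        using phi_in_free[OF S dS] phi_image_in_kernel[of a d, OF ad] by simp
    qed
  qed
qed

section \<open>The ideal of a square chain is not projective\<close>

lemma chain_divides:
  assumes S: "is_subring S" and ad: "\<And>n. a n = d n * a (Suc n)" and dS: "\<And>n. d n \<in> S"
  shows "i \<le> N \<Longrightarrow> \<exists>h\<in>S. a i = a N * h"
proof (induction N)
  case 0 thus ?case using subringD(2)[OF S] by (intro bexI[of _ 1]) auto
next
  case (Suc N)
  show ?case
  proof (cases "i = Suc N")
    case True thus ?thesis using subringD(2)[OF S] by (intro bexI[of _ 1]) auto
  next
    case False
    then obtain h where h: "h \<in> S" "a i = a N * h" using Suc by auto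
    hence "a i = a (Suc N) * (d N * h)" using ad[of N] by (simp add: mult_ac)
    thus ?thesis using subringD(5)[OF S dS h(1)] by blast
  qed
qed

lemma ideal_eventually_divisible:
  assumes S: "is_subring S" and ad: "\<And>n. a n = d n * a (Suc n)" and dS: "\<And>n. d n \<in> S"
    and y: "y \<in> ideal_gen S (range a)"
  shows "eventually (\<lambda>N. \<exists>h\<in>S. y = a N * h) sequentially"
proof -
  let ?T = "{y. eventually (\<lambda>N. \<exists>h\<in>S. y = a N * h) sequentially}"
  have "ideal_gen S (range a) \<subseteq> ?T"
  proof (rule ideal_gen_least)
    have "\<exists>h\<in>S. 0 = a N * h" for N using subringD(1)[OF S] by force
    thus "0 \<in> ?T" by (simp add: always_eventually)
  next
    fix y1 y2 assume "y1 \<in> ?T" "y2 \<in> ?T"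
    hence "eventually (\<lambda>N. (\<exists>h\<in>S. y1 = a N * h) \<and> (\<exists>h\<in>S. y2 = a N * h)) sequentially"
      by (simp add: eventually_conj)
    moreover have "\<exists>h\<in>S. y1 + y2 = a N * h"
      if "(\<exists>h\<in>S. y1 = a N * h) \<and> (\<exists>h\<in>S. y2 = a N * h)" for N
    proof -
      from that obtain h1 h2 where "h1 \<in> S" "y1 = a N * h1" "h2 \<in> S" "y2 = a N * h2" by blast
      thus ?thesis using subringD(3)[OF S] by (intro bexI[of _ "h1 + h2"]) (simp_all add: distrib_left)
    qed
    ultimately have "eventually (\<lambda>N. \<exists>h\<in>S. y1 + y2 = a N * h) sequentially"
      by (rule eventually_mono)
    thus "y1 + y2 \<in> ?T" by simp
  next
    fix s g assume s: "s \<in> S" and "g \<in> range a"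
    then obtain i where gi: "g = a i" by blast
    have "\<exists>h\<in>S. s * g = a N * h" if iN: "N \<ge> i" for N
    proof -
      obtain h where "h \<in> S" "a i = a N * h" using chain_divides[of S a d, OF S ad dS iN] by blast
      thus ?thesis using subringD(5)[OF S s] gi by (intro bexI[of _ "s * h"]) (simp_all add: mult_ac)
    qed
    thus "s * g \<in> ?T" by (auto simp: eventually_sequentially)
  qed
  thus ?thesis using y by blast
qed

lemma hom_FK_zero:
  assumes S: "is_subring S" and hom: "hom_FK S (free_mod S J) \<pi>"
  shows "\<pi> (\<lambda>_. 0) = 0"
proof -
  have zF: "(\<lambda>_. 0) \<in> free_mod S J" using subringD(1)[OF S] unfolding free_mod_def by auto
  have H: "\<And>u v s. u \<in> free_mod S J \<Longrightarrow> v \<in> free_mod S J \<Longrightarrow> s \<in> S \<Longrightarrow>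
      \<pi> (\<lambda>i. s * u i + v i) = s * \<pi> u + \<pi> v"
    using hom unfolding hom_FK_def by blast
  from H[OF zF zF subringD(2)[OF S]]
  have "\<pi> (\<lambda>_. 0) = \<pi> (\<lambda>_. 0) + \<pi> (\<lambda>_. 0)" by (simp only: mult_1 add_0_right)
  thus ?thesis by (metis add_cancel_right_right)
qed

lemma hom_FK_basis_expansion:
  assumes S: "is_subring S" and hom: "hom_FK S (free_mod S J) \<pi>"
  shows "finite F \<Longrightarrow> F \<subseteq> J \<Longrightarrow> u \<in> free_mod S J \<Longrightarrow> {i. u i \<noteq> 0} \<subseteq> F \<Longrightarrow>
     \<pi> u = (\<Sum>j\<in>F. u j * \<pi> (\<lambda>i. if i = j then 1 else 0))"
proof (induction F arbitrary: u rule: finite_induct)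
  case empty
  hence "u = (\<lambda>_. 0)" by auto
  thus ?case using hom_FK_zero[OF S hom] by simp
next
  case (insert j F)
  define u' where "u' = u(j := 0)"
  define e where "e = (\<lambda>i. if i = j then (1::'a) else 0)"
  have u'F: "u' \<in> free_mod S J" using insert.prems(2) subringD(1)[OF S] unfolding free_mod_def u'_def
    by (auto intro: finite_subset[of _ "{i. u i \<noteq> 0}"])
  have eF: "e \<in> free_mod S J" using insert.prems(1) subringD(1,2)[OF S] unfolding free_mod_def e_def
    by (auto intro: finite_subset[of _ "{j}"])
  have uj: "u j \<in> S" using insert.prems(2) unfolding free_mod_def by auto
  have "\<pi> (\<lambda>i. u j * e i + u' i) = u j * \<pi> e + \<pi> u'"
    using hom eF u'F uj unfolding hom_FK_def by blast
  moreover have "(\<lambda>i. u j * e i + u' i) = u" unfolding e_def u'_def by auto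
  ultimately have "\<pi> u = u j * \<pi> e + \<pi> u'" by simp
  also have "\<pi> u' = (\<Sum>i\<in>F. u' i * \<pi> (\<lambda>k. if k = i then 1 else 0))"
  proof (rule insert.IH)
    show "F \<subseteq> J" using insert.prems(1) by simp
    show "u' \<in> free_mod S J" by (rule u'F)
    show "{i. u' i \<noteq> 0} \<subseteq> F" using insert.prems(3) unfolding u'_def by auto
  qed
  also have "\<dots> = (\<Sum>i\<in>F. u i * \<pi> (\<lambda>k. if k = i then 1 else 0))"
    using insert.hyps unfolding u'_def by (intro sum.cong) auto
  finally show ?case using insert.hyps by (simp add: e_def)
qed

lemma hom_KF_smult:
  assumes S: "is_subring S" and hom: "hom_KF S M \<sigma>" and zM: "0 \<in> M"
    and s: "s \<in> S" and y: "y \<in> M"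
  shows "\<sigma> (s * y) = (\<lambda>j. s * \<sigma> y j)"
proof -
  have "\<sigma> (1 * 0 + 0) = (\<lambda>j. 1 * \<sigma> 0 j + \<sigma> 0 j)"
    using hom zM subringD(2)[OF S] unfolding hom_KF_def by blast
  hence "\<sigma> 0 = (\<lambda>j. \<sigma> 0 j + \<sigma> 0 j)" by (simp only: mult_1 add_0_right mult_zero_right)
  hence "\<sigma> 0 j = \<sigma> 0 j + \<sigma> 0 j" for j by (rule fun_cong[THEN trans]) simp
  hence "\<sigma> 0 j = 0" for j by (metis add_cancel_right_right)
  hence s0: "\<sigma> 0 = (\<lambda>_. 0)" by auto
  have "\<sigma> (s * y + 0) = (\<lambda>j. s * \<sigma> y j + \<sigma> 0 j)" using hom zM s y unfolding hom_KF_def by blast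
  thus ?thesis using s0 by simp
qed

lemma projective_dual_basis:
  fixes M :: "'k::field set"
  assumes S: "is_subring S" and P: "projective_mod S M" and zM: "0 \<in> M" and y0: "y0 \<in> M"
  obtains F :: "'k set" and g f where "finite F" "\<forall>j\<in>F. g j \<in> M" "\<forall>y\<in>M. \<forall>j. f y j \<in> S"
    "\<forall>s\<in>S. \<forall>y\<in>M. f (s * y) = (\<lambda>j. s * f y j)" "y0 = (\<Sum>j\<in>F. f y0 j * g j)"
proof -
  obtain J :: "'k set" and \<sigma> \<pi> where
    hs: "hom_KF S M \<sigma>" and sF: "\<sigma> ` M \<subseteq> free_mod S J" and hp: "hom_FK S (free_mod S J) \<pi>"
    and pM: "\<pi> ` free_mod S J \<subseteq> M" and inv: "\<forall>y\<in>M. \<pi> (\<sigma> y) = y"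
    using P unfolding projective_mod_def by blast
  define F where "F = {j. \<sigma> y0 j \<noteq> 0}"
  have u0F: "\<sigma> y0 \<in> free_mod S J" using sF y0 by auto
  hence F: "finite F" "F \<subseteq> J" using u0F unfolding free_mod_def F_def by auto
  define g where "g j = \<pi> (\<lambda>i. if i = j then 1 else 0)" for j
  have gM: "g j \<in> M" if "j \<in> J" for j
  proof -
    have "(\<lambda>i. if i = j then 1 else 0) \<in> free_mod S J" using that subringD(1,2)[OF S]
      unfolding free_mod_def by (auto intro: finite_subset[of _ "{j}"])
    thus ?thesis unfolding g_def using pM by auto
  qed
  have "\<forall>y\<in>M. \<forall>j. \<sigma> y j \<in> S" using sF unfolding free_mod_def by blast
  moreover have "\<forall>s\<in>S. \<forall>y\<in>M. \<sigma> (s * y) = (\<lambda>j. s * \<sigma> y j)"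
    using hom_KF_smult[OF S hs zM] by blast
  moreover have "y0 = (\<Sum>j\<in>F. \<sigma> y0 j * g j)"
    using hom_FK_basis_expansion[OF S hp F u0F] inv y0 unfolding g_def F_def by simp
  moreover have "\<forall>j\<in>F. g j \<in> M" using gM F(2) by blast
  ultimately show ?thesis using that[OF F(1)] by blast
qed

text \<open>Writing a_0 = sum f_j(a_0) g_j with all g_j divisible by a_N and using
  a_0 f_j(b) = b f_j(a_0) for b = a_(N+1), one finds that b is a unit.\<close>
theorem square_chain_not_projective:
  fixes a e :: "nat \<Rightarrow> 'k::field"
  assumes S: "is_subring S" and aS: "\<And>n. a n \<in> S" and a0: "\<And>n. a n \<noteq> 0"
    and eS: "\<And>n. e n \<in> S" and ae: "\<And>n. a n = a (Suc n) * a (Suc n) * e n"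
    and nu: "\<And>n. \<not> unit_in S (a n)"
  shows "\<not> projective_mod S (ideal_gen S (range a))"
proof
  define M where "M = ideal_gen S (range a)"
  define d where "d n = a (Suc n) * e n" for n
  have ad: "a n = d n * a (Suc n)" for n using ae[of n] unfolding d_def by (simp add: mult_ac)
  have dS: "d n \<in> S" for n unfolding d_def using subringD(5)[OF S aS eS] .
  have aM: "a n \<in> M" for n unfolding M_def by (rule ideal_gen_gen[OF S]) auto
  have zM: "0 \<in> M" unfolding M_def by (rule ideal_gen_0)
  assume P: "projective_mod S M"
  obtain F :: "'k set" and g f where F: "finite F" and gM: "\<forall>j\<in>F. g j \<in> M"
    and fS: "\<forall>y\<in>M. \<forall>j. f y j \<in> S" and f_lin: "\<forall>s\<in>S. \<forall>y\<in>M. f (s * y) = (\<lambda>j. s * f y j)"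
    and y0: "a 0 = (\<Sum>j\<in>F. f (a 0) j * g j)"
    by (rule projective_dual_basis[OF S P zM aM[of 0]])
  have "eventually (\<lambda>N. \<forall>j\<in>F. \<exists>h\<in>S. g j = a N * h) sequentially"
    using gM ideal_eventually_divisible[of S a d, OF S ad dS] unfolding M_def
    by (intro eventually_ball_finite[OF F]) blast
  then obtain N where "\<forall>j\<in>F. \<exists>h\<in>S. g j = a N * h" by (auto simp: eventually_sequentially)
  hence "\<forall>j\<in>F. \<exists>h'. h' \<in> S \<and> g j = a N * h'" by (simp add: Bex_def)
  then obtain h where h: "\<forall>j\<in>F. h j \<in> S \<and> g j = a N * h j" by (rule bchoice[THEN exE])
  define b where "b = a (Suc N)"
  define t where "t = (\<Sum>j\<in>F. f b j * e N * h j)"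
  have "f b j * e N * h j \<in> S" if "j \<in> F" for j
    using h that fS aM[of "Suc N"] eS[of N] subringD(5)[OF S] unfolding b_def by meson
  hence tS: "t \<in> S" unfolding t_def by (rule subring_sum[OF S])
  have cross: "a 0 * f b j = b * f (a 0) j" for j
  proof -
    have "(\<lambda>j. a 0 * f b j) = f (a 0 * b)" using f_lin aS[of 0] aM[of "Suc N"] unfolding b_def by simp
    also have "\<dots> = f (b * a 0)" by (simp add: mult.commute)
    also have "\<dots> = (\<lambda>j. b * f (a 0) j)" using f_lin aS[of "Suc N"] aM[of 0] unfolding b_def by simp
    finally show ?thesis by (rule fun_cong)
  qed
  have termwise: "a 0 * (b * (f b j * e N * h j)) = f (a 0) j * ((b * b * e N) * h j)" for j
  proof -
    have "a 0 * (b * (f b j * e N * h j)) = (a 0 * f b j) * (b * e N * h j)" by (simp add: mult_ac)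
    also have "\<dots> = f (a 0) j * ((b * b * e N) * h j)" unfolding cross by (simp add: mult_ac)
    finally show ?thesis .
  qed
  have "a 0 * (b * t) = (\<Sum>j\<in>F. f (a 0) j * ((b * b * e N) * h j))"
    unfolding t_def sum_distrib_left by (rule sum.cong[OF refl termwise])
  also have "\<dots> = (\<Sum>j\<in>F. f (a 0) j * g j)"
    using h ae[of N] unfolding b_def by (intro sum.cong) auto
  also have "\<dots> = a 0" using y0 by simp
  finally have "b * t = 1" using a0[of 0] by simp
  thus False using nu tS unfolding b_def unit_in_def by blast
qed

section \<open>Square chains of roots in R+\<close>

theorem square_chain_pd_eq_1:
  fixes a e :: "nat \<Rightarrow> 'k::field"
  assumes S: "is_subring S" and aS: "\<And>n. a n \<in> S" and a0: "\<And>n. a n \<noteq> 0"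
    and eS: "\<And>n. e n \<in> S" and ae: "\<And>n. a n = a (Suc n) * a (Suc n) * e n"
    and nu: "\<And>n. \<not> unit_in S (a n)"
  shows "pd_eq_1 S (ideal_gen S (range a))"
proof -
  have "a n = (a (Suc n) * e n) * a (Suc n)" for n using ae[of n] by (simp add: mult_ac)
  moreover have "a (Suc n) * e n \<in> S" for n using subringD(5)[OF S aS eS] .
  ultimately have "countable_free_res_le1 S (ideal_gen S (range a))"
    by (intro chain_resolution[OF S a0])
  thus ?thesis using square_chain_not_projective[where a = a and e = e, OF S aS a0 eS ae nu] unfolding pd_eq_1_def by blast
qed

lemma nonunit_root:
  assumes S: "is_subring S" and nx: "\<not> unit_in S x" and k: "y ^ k = x"
  shows "\<not> unit_in S y"
proof
  assume "unit_in S y"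
  then obtain b where b: "b \<in> S" "y * b = 1" unfolding unit_in_def by blast
  have "x * b ^ k = (y * b) ^ k" using k by (simp add: power_mult_distrib)
  hence "x * b ^ k = 1" using b by simp
  thus False using nx subring_power[OF S b(1)] unfolding unit_in_def by blast
qed

lemma root_in_plus_closure:
  assumes R: "is_subring R" and x: "x \<in> plus_closure R" "x \<noteq> 0" "\<not> unit_in (plus_closure R) x"
    and q: "q \<ge> 1" and y: "y ^ q = x"
  shows "y \<in> plus_closure R" "y \<noteq> 0" "\<not> unit_in (plus_closure R) y"
proof -
  show "y \<in> plus_closure R"
    using integral_root[OF R _ q y] x(1) unfolding plus_closure_def by simp
  show "y \<noteq> 0" using x(2) y q by auto
  show "\<not> unit_in (plus_closure R) y"
    by (rule nonunit_root[OF plus_closure_subring[OF R] x(3) y])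
qed

text \<open>Characteristic 0 (in fact any characteristic), given a compatible system r of roots:
  a_n = r((n+1)!) satisfies a_n = a_(n+1)^(n+2), and generates the same ideal as all r_n.\<close>
lemma compatible_roots_pd_eq_1:
  fixes R :: "'k::field set" and x :: 'k
  assumes R: "is_subring R" and x: "x \<in> plus_closure R" "x \<noteq> 0" "\<not> unit_in (plus_closure R) x"
    and cr: "compatible_roots x r"
  shows "pd_eq_1 (plus_closure R) (ideal_gen (plus_closure R) {r n |n. n \<ge> 1})"
proof -
  define S where "S = plus_closure R"
  have S: "is_subring S" unfolding S_def by (rule plus_closure_subring[OF R])
  have cm: "\<And>n m. n \<ge> 1 \<Longrightarrow> m \<ge> 1 \<Longrightarrow> r (n * m) ^ m = r n" and r1: "r 1 = x"
    using cr unfolding compatible_roots_def by auto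
  define a where "a n = r (fact (Suc n))" for n
  have fpos: "(fact (Suc n) :: nat) \<ge> 1" for n by (rule fact_ge_1)
  have "a n ^ fact (Suc n) = x" for n unfolding a_def using cm[of 1] fpos r1 by simp
  note a = root_in_plus_closure[OF R x fpos this, folded S_def]
  have ae: "a n = a (Suc n) * a (Suc n) * a (Suc n) ^ n" for n
  proof -
    have "(fact (Suc (Suc n)) :: nat) = fact (Suc n) * Suc (Suc n)"
      by (simp only: fact_Suc[of "Suc n"] of_nat_id mult.commute)
    hence "a (Suc n) = r (fact (Suc n) * Suc (Suc n))" unfolding a_def by (simp only:)
    hence "a (Suc n) ^ Suc (Suc n) = a n" unfolding a_def using cm[OF fpos[of n], of "Suc (Suc n)"] by simp
    moreover have "a (Suc n) ^ Suc (Suc n) = a (Suc n) * a (Suc n) * a (Suc n) ^ n" by (simp add: mult_ac)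
    ultimately show ?thesis by simp
  qed
  have "ideal_gen S {r n |n. n \<ge> 1} = ideal_gen S (range a)"
  proof (intro equalityI ideal_gen_mono[OF S] subsetI)
    fix y assume "y \<in> {r n |n. n \<ge> 1}"
    then obtain n where n: "y = r n" "n \<ge> 1" by blast
    then obtain m where m: "n = Suc m" by (cases n) auto
    have "n dvd fact n" using n(2) by (simp add: dvd_fact)
    then obtain q where q: "fact n = n * q" by (elim dvdE)
    then obtain q' where q': "q = Suc q'" using fact_nonzero[of n, where 'a = nat] by (cases q) auto
    have "a m ^ Suc q' = r n" unfolding a_def m[symmetric] q q' using n(2) by (intro cm) auto
    hence "y = a m ^ q' * a m" using n(1) by (simp add: mult.commute)
    thus "y \<in> ideal_gen S (range a)"
      by (simp add: ideal_gen_smult[OF S subring_power[OF S a(1)] ideal_gen_gen[OF S rangeI]])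
  next
    fix y assume "y \<in> range a"
    hence "y \<in> {r n |n. n \<ge> 1}" unfolding a_def using fpos by blast
    thus "y \<in> ideal_gen S {r n |n. n \<ge> 1}" by (rule ideal_gen_gen[OF S])
  qed
  moreover have "pd_eq_1 S (ideal_gen S (range a))"
    by (rule square_chain_pd_eq_1[where e = "\<lambda>n. a (Suc n) ^ n", OF S a(1,2) subring_power[OF S a(1)] ae a(3)])
  ultimately show ?thesis unfolding S_def by simp
qed

text \<open>In characteristic p the Frobenius map is injective, so p^n-th roots are unique.\<close>
lemma add_power_CHAR:
  fixes y z :: "'k::field"
  assumes p: "prime p" "CHAR('k) = p"
  shows "(y + z) ^ p = y ^ p + z ^ p"
proof -
  have "(y + z) ^ p = (\<Sum>k\<le>p. of_nat (p choose k) * y ^ k * z ^ (p - k))"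
    by (rule binomial_ring)
  also have "\<dots> = (\<Sum>k\<in>{0, p}. of_nat (p choose k) * y ^ k * z ^ (p - k))"
  proof (rule sum.mono_neutral_right)
    show "\<forall>i\<in>{..p} - {0, p}. of_nat (p choose i) * y ^ i * z ^ (p - i) = 0"
    proof
      fix i assume i: "i \<in> {..p} - {0, p}"
      have "p dvd (p choose i)" using i p(1) by (intro dvd_choose_prime) (auto simp: prime_gt_0_nat)
      hence "(of_nat (p choose i) :: 'k) = 0" using p(2) by (simp add: of_nat_eq_0_iff_char_dvd)
      thus "of_nat (p choose i) * y ^ i * z ^ (p - i) = 0" by simp
    qed
  qed auto
  also have "\<dots> = y ^ p + z ^ p" using prime_gt_0_nat[OF p(1)] by (simp add: add.commute)
  finally show ?thesis .
qed

lemma frobenius_power_inj: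
  fixes y z :: "'k::field"
  assumes p: "prime p" "CHAR('k) = p"
  shows "y ^ (p ^ n) = z ^ (p ^ n) \<Longrightarrow> y = z"
proof (induction n arbitrary: y z)
  case 0 thus ?case by simp
next
  case (Suc n)
  have "(y ^ p) ^ (p ^ n) = (z ^ p) ^ (p ^ n)" using Suc.prems by (simp add: power_mult[symmetric] mult.commute)
  hence "y ^ p = z ^ p" by (rule Suc.IH)
  moreover have "(y + - z) ^ p = y ^ p + (- z) ^ p" by (rule add_power_CHAR[OF p])
  moreover have "(- z) ^ p = - (z ^ p)" by (rule minus_power_prime_CHAR) (use p in auto)
  ultimately have "(y - z) ^ p = 0" by simp
  thus ?case by simp
qed

lemma alg_closed_root:
  fixes b :: "'k::field"
  assumes ac: "alg_closed_field TYPE('k)" and p: "p \<ge> 1"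
  shows "\<exists>y. y ^ p = b"
proof -
  have "degree (monom (1::'k) p + [:-b:]) = p"
    using p by (subst degree_add_eq_left) (simp_all add: degree_monom_eq)
  hence "degree (monom (1::'k) p + [:-b:]) > 0" using p by simp
  then obtain z where "poly (monom 1 p + [:-b:]) z = 0" using ac unfolding alg_closed_field_def by blast
  hence "z ^ p = b" by (simp add: poly_monom)
  thus ?thesis ..
qed

text \<open>Characteristic p: in an algebraically closed field choose successive p-th roots
  a_(n+1)^p = a_n, a_0 = x; these are all the p^n-th roots of x.\<close>
lemma frobenius_roots_pd_eq_1:
  fixes R :: "'k::field set" and x :: 'k
  assumes R: "is_subring R" and ac: "alg_closed_field TYPE('k)"
    and x: "x \<in> plus_closure R" "x \<noteq> 0" "\<not> unit_in (plus_closure R) x"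
    and p: "prime p" "CHAR('k) = p"
  shows "pd_eq_1 (plus_closure R) (ideal_gen (plus_closure R) {y. \<exists>n. y ^ (p ^ n) = x})"
proof -
  define S where "S = plus_closure R"
  have S: "is_subring S" unfolding S_def by (rule plus_closure_subring[OF R])
  have p2: "p \<ge> 2" using p(1) by (rule prime_ge_2_nat)
  define a where "a = rec_nat x (\<lambda>n y. SOME z. z ^ p = y)"
  have a_Suc: "a (Suc n) ^ p = a n" for n
  proof -
    have "\<exists>z. z ^ p = a n" by (rule alg_closed_root[OF ac]) (use p2 in simp)
    hence "(SOME z. z ^ p = a n) ^ p = a n" by (rule someI_ex)
    thus ?thesis unfolding a_def by simp
  qed
  have ak: "a n ^ (p ^ n) = x" for n
  proof (induction n)
    case 0 thus ?case unfolding a_def by simp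
  next
    case (Suc n)
    have "a (Suc n) ^ (p ^ Suc n) = (a (Suc n) ^ p) ^ (p ^ n)" by (simp add: power_mult)
    thus ?case using a_Suc Suc by simp
  qed
  have "p ^ n \<ge> 1" for n using p2 by simp
  note a = root_in_plus_closure[OF R x this ak, folded S_def]
  have ae: "a n = a (Suc n) * a (Suc n) * a (Suc n) ^ (p - 2)" for n
  proof -
    have "a (Suc n) ^ p = a (Suc n) * a (Suc n) * a (Suc n) ^ (p - 2)"
      using p2 by (metis add_2_eq_Suc le_add_diff_inverse mult.assoc power_Suc)
    thus ?thesis using a_Suc[of n] by simp
  qed
  have "{y. \<exists>n. y ^ (p ^ n) = x} = range a"
  proof
    show "{y. \<exists>n. y ^ (p ^ n) = x} \<subseteq> range a"
    proof
      fix y assume "y \<in> {y. \<exists>n. y ^ (p ^ n) = x}"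
      then obtain n where "y ^ (p ^ n) = a n ^ (p ^ n)" using ak by auto
      hence "y = a n" by (rule frobenius_power_inj[OF p])
      thus "y \<in> range a" by simp
    qed
    show "range a \<subseteq> {y. \<exists>n. y ^ (p ^ n) = x}" using ak by blast
  qed
  moreover have "pd_eq_1 S (ideal_gen S (range a))"
    by (rule square_chain_pd_eq_1[where e = "\<lambda>n. a (Suc n) ^ (p - 2)", OF S a(1,2) subring_power[OF S a(1)] ae a(3)])
  ultimately show ?thesis unfolding S_def by simp
qed

theorem lemma4p2:
  fixes R :: "'k::field set" and x :: 'k
  assumes "is_alg_closure_of R"
    and "x \<in> plus_closure R" and "x \<noteq> 0" and "\<not> unit_in (plus_closure R) x"
  shows "(CHAR('k) = 0 \<longrightarrow>
           (\<forall>r. compatible_roots x r \<longrightarrow>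
              countable_free_res_le1 (plus_closure R) (ideal_gen (plus_closure R) {r n |n. n \<ge> 1}) \<and>
              (noetherian_ring R \<and> local_ring R \<and> henselian R \<longrightarrow>
                 pd_eq_1 (plus_closure R) (ideal_gen (plus_closure R) {r n |n. n \<ge> 1}))))
       \<and> (\<forall>p. prime p \<and> CHAR('k) = p \<longrightarrow>
              countable_free_res_le1 (plus_closure R) (ideal_gen (plus_closure R) {y. \<exists>n. y ^ (p ^ n) = x}) \<and>
              (noetherian_ring R \<and> local_ring R \<and> henselian R \<longrightarrow>
                 pd_eq_1 (plus_closure R) (ideal_gen (plus_closure R) {y. \<exists>n. y ^ (p ^ n) = x})))"
proof -
  have R: "is_subring R" and ac: "alg_closed_field TYPE('k)"
    using assms(1) unfolding is_alg_closure_of_def subring_of_iff_is_subring by auto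
  have char0: "pd_eq_1 (plus_closure R) (ideal_gen (plus_closure R) {r n |n. n \<ge> 1})"
    if "compatible_roots x r" for r
    by (rule compatible_roots_pd_eq_1[OF R assms(2-4) that])
  have charp: "pd_eq_1 (plus_closure R) (ideal_gen (plus_closure R) {y. \<exists>n. y ^ (p ^ n) = x})"
    if "prime p" "CHAR('k) = p" for p
    by (rule frobenius_roots_pd_eq_1[OF R ac assms(2-4) that])
  show ?thesis
  proof (intro conjI allI impI)
    fix r assume "compatible_roots x r"
    from char0[OF this] show "countable_free_res_le1 (plus_closure R) (ideal_gen (plus_closure R) {r n |n. n \<ge> 1})"
      and "pd_eq_1 (plus_closure R) (ideal_gen (plus_closure R) {r n |n. n \<ge> 1})"
      unfolding pd_eq_1_def by auto
  next
    fix p :: nat assume "prime p \<and> CHAR('k) = p"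
    with charp show "countable_free_res_le1 (plus_closure R) (ideal_gen (plus_closure R) {y. \<exists>n. y ^ (p ^ n) = x})"
      and "pd_eq_1 (plus_closure R) (ideal_gen (plus_closure R) {y. \<exists>n. y ^ (p ^ n) = x})"
      unfolding pd_eq_1_def by auto
  qed
qed

end
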